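(* Let $(W,S)$ be a Coxeter group with $W$ finite, and let $\mathfrak o$ be an orientation of $(W,S)$. Then $\mathfrak o=\mathfrak o_w$ for some $w\in W$.
   Context: $\ell$ is the length function of $(W,S)$ and $m(s,t)$ the order of $st$. An orientation of $(W,S)$ is a map $\mathfrak o:W\times S\to\{\pm1\}$ such that (OR1) $\mathfrak o(ws,s)=-\mathfrak o(w,s)$ for all $w\in W,s\in S$; and (OR2) whenever $s,t\in S$ with $m=m(s,t)<\infty$ and $w\in W$, the two sequences $(\mathfrak o(w,s),\mathfrak o(ws,t),\mathfrak o(wst,s),\dots)$ and $(\mathfrak o(w,t),\mathfrak o(wt,s),\mathfrak o(wts,t),\dots)$, each of length $m$, are for some $0\le k\le m$ either of the form $(+,\dots,+,-,\dots,-)$ ($k$ plus signs then $m-k$ minus signs) and $(-,\dots,-,+,\dots,+)$ ($m-k$ minus then $k$ plus), or of the form $(-,\dots,-,+,\dots,+)$ ($k$ minus then $m-k$ plus) and $(+,\dots,+,-,\dots,-)$ ($m-k$ plus then $k$ minus). For $w_0\in W$, the orientation towards $w_0$ is $\mathfrak o_{w_0}(w,s)=+1$ if $\ell(w_0^{-1}ws)<\ell(w_0^{-1}w)$ and $-1$ if $\ell(w_0^{-1}ws)>\ell(w_0^{-1}w)$. *)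

theory Defs
  imports "HOL-Algebra.Generated_Groups" "HOL-Algebra.Multiplicative_Group"
begin

text \<open>m(s,t): the order of st in W (0 if infinite, following group.ord).\<close>
definition cox_m :: "'a monoid \<Rightarrow> 'a \<Rightarrow> 'a \<Rightarrow> nat" where
  "cox_m W s t = group.ord W (s \<otimes>\<^bsub>W\<^esub> t)"

text \<open>Coxeter system via the universal property of the presentation
  <S | s^2, (st)^m(s,t)>.  Test groups H are taken with carrier type
  'a list set set, which suffices since the presented group has as elements
  equivalence classes of words over S.\<close>
definition coxeter_system :: "'a monoid \<Rightarrow> 'a set \<Rightarrow> bool" where
  "coxeter_system W S \<longleftrightarrow>
     group W \<and> S \<subseteq> carrier W \<and>
     (\<forall>s\<in>S. s \<noteq> \<one>\<^bsub>W\<^esub> \<and> s \<otimes>\<^bsub>W\<^esub> s = \<one>\<^bsub>W\<^esub>) \<and>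
     generate W S = carrier W \<and>
     (\<forall>(H :: 'a list set monoid) f. group H \<and> f \<in> S \<rightarrow> carrier H \<and>
        (\<forall>s\<in>S. \<forall>t\<in>S. (f s \<otimes>\<^bsub>H\<^esub> f t) [^]\<^bsub>H\<^esub> cox_m W s t = \<one>\<^bsub>H\<^esub>)
        \<longrightarrow> (\<exists>h\<in>hom W H. \<forall>s\<in>S. h s = f s))"

definition word_prod :: "'a monoid \<Rightarrow> 'a list \<Rightarrow> 'a" where
  "word_prod W ws = foldr (\<lambda>x y. x \<otimes>\<^bsub>W\<^esub> y) ws \<one>\<^bsub>W\<^esub>"

definition cox_length :: "'a monoid \<Rightarrow> 'a set \<Rightarrow> 'a \<Rightarrow> nat" where
  "cox_length W S w = (LEAST n. \<exists>ws. length ws = n \<and> set ws \<subseteq> S \<and> word_prod W ws = w)"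

fun alt_prod :: "'a monoid \<Rightarrow> 'a \<Rightarrow> 'a \<Rightarrow> nat \<Rightarrow> 'a" where
  "alt_prod W s t 0 = \<one>\<^bsub>W\<^esub>"
| "alt_prod W s t (Suc n) = alt_prod W s t n \<otimes>\<^bsub>W\<^esub> (if even n then s else t)"

text \<open>i-th term (0-based) of the sequence (o(w,s), o(ws,t), o(wst,s), ...).\<close>
definition or_seq :: "'a monoid \<Rightarrow> ('a \<Rightarrow> 'a \<Rightarrow> int) \<Rightarrow> 'a \<Rightarrow> 'a \<Rightarrow> 'a \<Rightarrow> nat \<Rightarrow> int" where
  "or_seq W ori w s t i = ori (w \<otimes>\<^bsub>W\<^esub> alt_prod W s t i) (if even i then s else t)"

definition orientation :: "'a monoid \<Rightarrow> 'a set \<Rightarrow> ('a \<Rightarrow> 'a \<Rightarrow> int) \<Rightarrow> bool" where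
  "orientation W S ori \<longleftrightarrow>
     (\<forall>w\<in>carrier W. \<forall>s\<in>S. ori w s \<in> {1, -1}) \<and>
     (\<forall>w\<in>carrier W. \<forall>s\<in>S. ori (w \<otimes>\<^bsub>W\<^esub> s) s = - ori w s) \<and>
     (\<forall>s\<in>S. \<forall>t\<in>S. \<forall>w\<in>carrier W. cox_m W s t \<noteq> 0 \<longrightarrow>
        (let m = cox_m W s t in
         \<exists>k\<le>m.
          (\<forall>i<m. or_seq W ori w s t i = (if i < k then 1 else -1) \<and>
                  or_seq W ori w t s i = (if i < m - k then -1 else 1)) \<or>
          (\<forall>i<m. or_seq W ori w s t i = (if i < k then -1 else 1) \<and>
                  or_seq W ori w t s i = (if i < m - k then 1 else -1))))"

definition orientation_towards :: "'a monoid \<Rightarrow> 'a set \<Rightarrow> 'a \<Rightarrow> 'a \<Rightarrow> 'a \<Rightarrow> int" where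
  "orientation_towards W S w0 w s =
     (if cox_length W S (inv\<^bsub>W\<^esub> w0 \<otimes>\<^bsub>W\<^esub> w \<otimes>\<^bsub>W\<^esub> s) < cox_length W S (inv\<^bsub>W\<^esub> w0 \<otimes>\<^bsub>W\<^esub> w)
      then 1 else -1)"

end

theory Submission
  imports Defs "HOL-Library.Nat_Bijection"
begin

(* An orientation is the coboundary of a potential.  Since o(ws,s) = -o(w,s), and (OR2) makes
   the sums of o along the two alternating words of length m(s,t) agree, s |-> (s, o(-,s))
   respects the Coxeter relations in the wreath product Z wr W; the resulting homomorphism
   yields h : W -> Z with h(ws) = h(w) + o(w,s).
   Let w0 maximise h on the finite group W, so o(w0,s) = -1 for all s.  Induction on l(v) shows
   h(w0 v) = h(w0) - l(v): for an ascent v -> vr with l(v) = p, walk from v along s, r, s, ...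
   (where vs is a descent) as long as the length keeps dropping.  At the last point x of the walk
   both neighbours are ascents of length at most p, so o(w0 x, -) = -1 on both generators, and
   (OR2) forces the whole alternating sequence to be -1; the braid relation keeps the walk shorter
   than m(s,r), so its J-th term, which is o(w0 v, r), is -1.  Hence o = o_w0. *)

(* alt_prod is defined on 'a monoid only, not on general monoid schemes. *)
locale plain_group = group G for G :: "'g monoid" (structure)

context plain_group begin

lemma alt_prod_closed:
  "a \<in> carrier G \<Longrightarrow> b \<in> carrier G \<Longrightarrow> alt_prod G a b n \<in> carrier G"
  by (induction n) auto

lemma alt_prod_add:
  assumes "a \<in> carrier G" "b \<in> carrier G"
  shows "alt_prod G a b (m + n) =
    alt_prod G a b m \<otimes> alt_prod G (if even m then a else b) (if even m then b else a) n"
  by (induction n) (use assms in \<open>auto simp: alt_prod_closed m_assoc\<close>)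

lemma alt_prod_double:
  assumes "a \<in> carrier G" "b \<in> carrier G"
  shows "alt_prod G a b (2 * k) = (a \<otimes> b) [^] k"
proof (induction k)
  case (Suc k)
  have "alt_prod G a b (2 * Suc k) = alt_prod G a b (2 * k) \<otimes> alt_prod G a b 2"
    using alt_prod_add[OF assms, of "2 * k" 2] by simp
  then show ?case
    using Suc assms by (simp add: numeral_2_eq_2)
qed simp

lemma inv_eq_self_if_square_one: "a \<in> carrier G \<Longrightarrow> a \<otimes> a = \<one> \<Longrightarrow> inv a = a"
  by (rule inv_equality)

lemma alt_prod_Suc_left:
  "a \<in> carrier G \<Longrightarrow> b \<in> carrier G \<Longrightarrow> alt_prod G a b (Suc n) = a \<otimes> alt_prod G b a n"
  using alt_prod_add[of a b 1 n] by simp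

lemma alt_prod_inv:
  assumes "a \<in> carrier G" "b \<in> carrier G" "a \<otimes> a = \<one>" "b \<otimes> b = \<one>"
  shows "inv (alt_prod G a b n) = alt_prod G (if even n then b else a) (if even n then a else b) n"
proof (induction n)
  case (Suc n)
  define c e where "c = (if even n then a else b)" and "e = (if even n then b else a)"
  have "inv (alt_prod G a b (Suc n)) = c \<otimes> alt_prod G e c n"
    using Suc assms
    by (simp add: inv_mult_group alt_prod_closed inv_eq_self_if_square_one c_def e_def)
  also have "\<dots> = alt_prod G c e (Suc n)"
    by (rule alt_prod_Suc_left[symmetric]) (use assms in \<open>simp_all add: c_def e_def\<close>)
  finally show ?case by (simp add: c_def e_def)
qed simp

lemma alt_prod_braid_iff:
  assumes "a \<in> carrier G" "b \<in> carrier G" "a \<otimes> a = \<one>" "b \<otimes> b = \<one>"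
  shows "alt_prod G a b m = alt_prod G b a m \<longleftrightarrow> (a \<otimes> b) [^] m = \<one>"
proof -
  define c d where "c = (if even m then a else b)" and "d = (if even m then b else a)"
  have cd: "c \<in> carrier G" "d \<in> carrier G" using assms by (simp_all add: c_def d_def)
  have "(a \<otimes> b) [^] m = alt_prod G a b m \<otimes> alt_prod G c d m"
    using alt_prod_double[OF assms(1,2), of m] alt_prod_add[OF assms(1,2), of m m]
    by (simp add: c_def d_def mult_2)
  also have "\<dots> = \<one> \<longleftrightarrow> alt_prod G c d m = inv (alt_prod G a b m)"
    using assms cd by (metis alt_prod_closed inv_equality inv_comm r_inv)
  also have "inv (alt_prod G a b m) = alt_prod G d c m"
    using alt_prod_inv[OF assms] by (simp add: c_def d_def)
  finally show ?thesis
    by (auto simp: c_def d_def)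
qed

end

lemma sum_lessThan_if_less:
  fixes a b :: "'a :: comm_semiring_1"
  shows "k \<le> m \<Longrightarrow> (\<Sum>i<m. if i < k then a else b) = of_nat k * a + of_nat (m - k) * b"
proof (induction m)
  case (Suc m)
  then show ?case
    by (cases "k = Suc m") (auto simp: Suc_diff_le algebra_simps)
qed simp

definition int_wreath :: "('g, 'c) monoid_scheme \<Rightarrow> ('g \<times> ('g \<Rightarrow> int)) monoid" where
  "int_wreath W =
    \<lparr>carrier = carrier W \<times> extensional (carrier W),
     mult = (\<lambda>(w, f) (v, g). (w \<otimes>\<^bsub>W\<^esub> v, restrict (\<lambda>x. f x + g (x \<otimes>\<^bsub>W\<^esub> w)) (carrier W))),
     one = (\<one>\<^bsub>W\<^esub>, restrict (\<lambda>x. 0) (carrier W))\<rparr>"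

lemma int_wreath_simps:
  "carrier (int_wreath W) = carrier W \<times> extensional (carrier W)"
  "a \<otimes>\<^bsub>int_wreath W\<^esub> b =
    (fst a \<otimes>\<^bsub>W\<^esub> fst b, restrict (\<lambda>x. snd a x + snd b (x \<otimes>\<^bsub>W\<^esub> fst a)) (carrier W))"
  "\<one>\<^bsub>int_wreath W\<^esub> = (\<one>\<^bsub>W\<^esub>, restrict (\<lambda>x. 0) (carrier W))"
  by (simp_all add: int_wreath_def case_prod_beta)

lemma (in group) group_int_wreath: "group (int_wreath G)"
proof (rule groupI)
  fix a b c
  assume "a \<in> carrier (int_wreath G)" "b \<in> carrier (int_wreath G)" "c \<in> carrier (int_wreath G)"
  then obtain w f v g u k where "a = (w, f)" "b = (v, g)" "c = (u, k)"
    "w \<in> carrier G" "v \<in> carrier G" "u \<in> carrier G"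
    by (auto simp: int_wreath_simps)
  then show "a \<otimes>\<^bsub>int_wreath G\<^esub> b \<otimes>\<^bsub>int_wreath G\<^esub> c = a \<otimes>\<^bsub>int_wreath G\<^esub> (b \<otimes>\<^bsub>int_wreath G\<^esub> c)"
    by (simp add: int_wreath_simps m_assoc restrict_def fun_eq_iff)
next
  fix a assume "a \<in> carrier (int_wreath G)"
  then obtain w f where a: "a = (w, f)" "w \<in> carrier G" "f \<in> extensional (carrier G)"
    by (auto simp: int_wreath_simps)
  then show "\<one>\<^bsub>int_wreath G\<^esub> \<otimes>\<^bsub>int_wreath G\<^esub> a = a"
    by (simp add: int_wreath_simps fun_eq_iff restrict_def extensional_def)
  have "(inv w, restrict (\<lambda>x. - f (x \<otimes> inv w)) (carrier G)) \<otimes>\<^bsub>int_wreath G\<^esub> a = \<one>\<^bsub>int_wreath G\<^esub>"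
    using a by (simp add: int_wreath_simps fun_eq_iff restrict_def m_assoc)
  then show "\<exists>b\<in>carrier (int_wreath G). b \<otimes>\<^bsub>int_wreath G\<^esub> a = \<one>\<^bsub>int_wreath G\<^esub>"
    by (rule bexI) (use a(2) in \<open>simp add: int_wreath_simps\<close>)
qed (auto simp: int_wreath_simps)

definition int_wreath_code :: "('g, 'c) monoid_scheme \<Rightarrow> 'g \<times> ('g \<Rightarrow> int) \<Rightarrow> 'g list set" where
  "int_wreath_code W a =
    insert [fst a] ((\<lambda>x. x # x # replicate (int_encode (snd a x)) x) ` carrier W)"

lemma inj_on_int_wreath_code: "inj_on (int_wreath_code W) (carrier (int_wreath W))"
proof (rule inj_onI)
  fix a b
  assume a: "a \<in> carrier (int_wreath W)" and b: "b \<in> carrier (int_wreath W)"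
    and eq: "int_wreath_code W a = int_wreath_code W b"
  have "[fst a] \<in> int_wreath_code W a"
    by (simp add: int_wreath_code_def)
  then have "[fst a] \<in> int_wreath_code W b"
    by (simp only: eq)
  then have "fst a = fst b"
    by (auto simp: int_wreath_code_def)
  moreover have "snd a x = snd b x" for x
  proof (cases "x \<in> carrier W")
    case True
    then have "x # x # replicate (int_encode (snd a x)) x \<in> int_wreath_code W b"
      using eq by (auto simp: int_wreath_code_def)
    then have "int_encode (snd a x) = int_encode (snd b x)"
      by (auto simp: int_wreath_code_def)
    then show ?thesis
      using inj_int_encode by (simp add: inj_eq)
  next
    case False
    then show ?thesis using a b by (auto simp: int_wreath_simps extensional_def)
  qed
  ultimately show "a = b" by (simp add: prod_eq_iff fun_eq_iff)
qed

definition transport_group :: "('b, 'c) monoid_scheme \<Rightarrow> ('b \<Rightarrow> 'd) \<Rightarrow> 'd monoid" where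
  "transport_group G e =
    \<lparr>carrier = e ` carrier G,
     mult = (\<lambda>a b. e (inv_into (carrier G) e a \<otimes>\<^bsub>G\<^esub> inv_into (carrier G) e b)),
     one = e \<one>\<^bsub>G\<^esub>\<rparr>"

lemma transport_group:
  assumes G: "group G" and e: "inj_on e (carrier G)"
  shows "group (transport_group G e)" "e \<in> iso G (transport_group G e)"
proof -
  interpret G: group G by (rule G)
  let ?T = "transport_group G e"
  have carrier: "carrier ?T = e ` carrier G" and one: "\<one>\<^bsub>?T\<^esub> = e \<one>\<^bsub>G\<^esub>"
    by (simp_all add: transport_group_def)
  have mult: "e x \<otimes>\<^bsub>?T\<^esub> e y = e (x \<otimes>\<^bsub>G\<^esub> y)" if "x \<in> carrier G" "y \<in> carrier G" for x y
    using that e by (simp add: transport_group_def inv_into_f_f)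
  show "group ?T"
  proof (rule groupI)
    fix a b c assume "a \<in> carrier ?T" "b \<in> carrier ?T" "c \<in> carrier ?T"
    then show "a \<otimes>\<^bsub>?T\<^esub> b \<otimes>\<^bsub>?T\<^esub> c = a \<otimes>\<^bsub>?T\<^esub> (b \<otimes>\<^bsub>?T\<^esub> c)"
      by (auto simp: carrier mult G.m_assoc)
  next
    fix a assume "a \<in> carrier ?T"
    then obtain x where x: "x \<in> carrier G" "a = e x" by (auto simp: carrier)
    then show "\<one>\<^bsub>?T\<^esub> \<otimes>\<^bsub>?T\<^esub> a = a" by (simp add: one mult)
    have "e (inv\<^bsub>G\<^esub> x) \<otimes>\<^bsub>?T\<^esub> a = \<one>\<^bsub>?T\<^esub>" using x by (simp add: one mult)
    then show "\<exists>b\<in>carrier ?T. b \<otimes>\<^bsub>?T\<^esub> a = \<one>\<^bsub>?T\<^esub>"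
      using x by (auto simp: carrier)
  qed (auto simp: carrier mult one)
  show "e \<in> iso G ?T"
    using e by (auto simp: iso_def bij_betw_def carrier mult intro: homI)
qed

locale coxeter =
  fixes W :: "'g monoid" (structure) and S :: "'g set"
  assumes coxeter_system: "coxeter_system W S"
begin

sublocale plain_group W
  using coxeter_system unfolding coxeter_system_def plain_group_def by blast

lemma gens_closed: "s \<in> S \<Longrightarrow> s \<in> carrier W"
  using coxeter_system by (auto simp: coxeter_system_def)

lemma gen_square: "s \<in> S \<Longrightarrow> s \<otimes> s = \<one>"
  using coxeter_system by (simp add: coxeter_system_def)

lemma gen_inv: "s \<in> S \<Longrightarrow> inv s = s"
  by (simp add: gens_closed gen_square inv_eq_self_if_square_one)

lemma generate_gens: "generate W S = carrier W"
  using coxeter_system by (simp add: coxeter_system_def)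

lemma mult_gen_gen_cancel: "w \<in> carrier W \<Longrightarrow> s \<in> S \<Longrightarrow> w \<otimes> s \<otimes> s = w"
  by (simp add: gens_closed gen_square m_assoc)

lemma word_prod_Nil [simp]: "word_prod W [] = \<one>"
  by (simp add: word_prod_def)

lemma word_prod_Cons [simp]: "word_prod W (x # xs) = x \<otimes> word_prod W xs"
  by (simp add: word_prod_def)

lemma word_prod_closed: "set ws \<subseteq> S \<Longrightarrow> word_prod W ws \<in> carrier W"
  by (induction ws) (auto simp: gens_closed)

lemma word_prod_append:
  "set xs \<subseteq> S \<Longrightarrow> set ys \<subseteq> S \<Longrightarrow> word_prod W (xs @ ys) = word_prod W xs \<otimes> word_prod W ys"
  by (induction xs) (auto simp: gens_closed word_prod_closed m_assoc)

lemma word_prod_surj: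
  assumes "w \<in> carrier W"
  shows "\<exists>ws. set ws \<subseteq> S \<and> word_prod W ws = w"
proof -
  have "w \<in> generate W S" using assms generate_gens by simp
  then show ?thesis
  proof (induction rule: generate.induct)
    case one
    show ?case by (intro exI[of _ "[]"]) simp
  next
    case (incl s)
    then show ?case by (intro exI[of _ "[s]"]) (simp add: gens_closed)
  next
    case (inv s)
    then show ?case by (intro exI[of _ "[s]"]) (simp add: gens_closed gen_inv)
  next
    case (eng w v)
    then obtain xs ys where "set xs \<subseteq> S" "word_prod W xs = w" "set ys \<subseteq> S" "word_prod W ys = v"
      by blast
    then show ?case by (intro exI[of _ "xs @ ys"]) (simp add: word_prod_append)
  qed
qed

abbreviation len :: "'g \<Rightarrow> nat" where
  "len \<equiv> cox_length W S"

lemma reduced_word_exists: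
  "w \<in> carrier W \<Longrightarrow> \<exists>ws. length ws = len w \<and> set ws \<subseteq> S \<and> word_prod W ws = w"
  unfolding cox_length_def using word_prod_surj by (rule_tac LeastI_ex) blast

lemma len_word_prod_le: "set ws \<subseteq> S \<Longrightarrow> len (word_prod W ws) \<le> length ws"
  unfolding cox_length_def by (rule Least_le) blast

lemma len_eq_0_iff: "w \<in> carrier W \<Longrightarrow> len w = 0 \<longleftrightarrow> w = \<one>"
  using reduced_word_exists[of w] len_word_prod_le[of "[]"] by fastforce

lemma len_mult_gen_le:
  assumes w: "w \<in> carrier W" and s: "s \<in> S"
  shows "len (w \<otimes> s) \<le> len w + 1"
proof -
  obtain ws where ws: "length ws = len w" "set ws \<subseteq> S" "word_prod W ws = w"
    using reduced_word_exists[OF w] by blast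
  then have "word_prod W (ws @ [s]) = w \<otimes> s"
    using s by (simp add: word_prod_append gens_closed)
  then show ?thesis
    using len_word_prod_le[of "ws @ [s]"] ws s by simp
qed

lemma len_le_mult_gen: "w \<in> carrier W \<Longrightarrow> s \<in> S \<Longrightarrow> len w \<le> len (w \<otimes> s) + 1"
  using len_mult_gen_le[of "w \<otimes> s" s] by (simp add: gens_closed mult_gen_gen_cancel)

lemma len_Suc_decompose:
  assumes "w \<in> carrier W" "len w = Suc p"
  obtains v s where "v \<in> carrier W" "s \<in> S" "w = v \<otimes> s" "len v = p"
proof -
  obtain ws' where ws': "length ws' = Suc p" "set ws' \<subseteq> S" "word_prod W ws' = w"
    using reduced_word_exists[OF assms(1)] assms(2) by auto
  then obtain ws s where ws: "ws' = ws @ [s]" "length ws = p"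
    by (auto simp: length_Suc_conv_rev)
  have gens: "set ws \<subseteq> S" "s \<in> S" using ws' ws by auto
  have w: "w = word_prod W ws \<otimes> s"
    using ws' ws gens by (simp add: word_prod_append gens_closed)
  have "len (word_prod W ws) = p"
    using len_word_prod_le[OF gens(1)] len_mult_gen_le[OF word_prod_closed gens(2)] gens w ws(2) assms(2)
    by fastforce
  then show ?thesis using that gens w word_prod_closed by blast
qed

lemma alt_prod_gens_closed: "a \<in> S \<Longrightarrow> b \<in> S \<Longrightarrow> alt_prod W a b k \<in> carrier W"
  by (simp add: alt_prod_closed gens_closed)

lemma len_le_mult_alt_prod:
  assumes "y \<in> carrier W" "a \<in> S" "b \<in> S"
  shows "len y \<le> len (y \<otimes> alt_prod W a b k) + k"
proof (induction k)
  case (Suc k)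
  define c where "c = (if even k then a else b)"
  have c: "c \<in> S" using assms by (simp add: c_def)
  have "y \<otimes> alt_prod W a b (Suc k) = (y \<otimes> alt_prod W a b k) \<otimes> c"
    using assms c by (simp add: alt_prod_gens_closed gens_closed m_assoc c_def)
  then show ?case
    using Suc len_le_mult_gen[OF _ c, of "y \<otimes> alt_prod W a b k"] assms
    by (simp add: alt_prod_gens_closed)
qed (use assms in simp)

lemma cox_m_sym: "s \<in> S \<Longrightarrow> t \<in> S \<Longrightarrow> cox_m W s t = cox_m W t s"
  using ord_inv[of "s \<otimes> t"] by (simp add: cox_m_def inv_mult_group gens_closed gen_inv)

lemma alt_prod_cox_m: "s \<in> S \<Longrightarrow> t \<in> S \<Longrightarrow> alt_prod W s t (cox_m W s t) = alt_prod W t s (cox_m W s t)"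
  by (simp add: alt_prod_braid_iff gens_closed gen_square cox_m_def)

lemma cox_m_pos: "finite (carrier W) \<Longrightarrow> s \<in> S \<Longrightarrow> t \<in> S \<Longrightarrow> 0 < cox_m W s t"
  using ord_ge_1[of "s \<otimes> t"] by (simp add: cox_m_def gens_closed)

lemma universal_property:
  fixes H :: "'g list set monoid"
  assumes "group H" "f \<in> S \<rightarrow> carrier H"
    "\<forall>s\<in>S. \<forall>t\<in>S. (f s \<otimes>\<^bsub>H\<^esub> f t) [^]\<^bsub>H\<^esub> cox_m W s t = \<one>\<^bsub>H\<^esub>"
  shows "\<exists>h\<in>hom W H. \<forall>s\<in>S. h s = f s"
proof -
  have "\<forall>(H :: 'g list set monoid) f. group H \<and> f \<in> S \<rightarrow> carrier H \<and>
        (\<forall>s\<in>S. \<forall>t\<in>S. (f s \<otimes>\<^bsub>H\<^esub> f t) [^]\<^bsub>H\<^esub> cox_m W s t = \<one>\<^bsub>H\<^esub>)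
        \<longrightarrow> (\<exists>h\<in>hom W H. \<forall>s\<in>S. h s = f s)"
    using coxeter_system unfolding coxeter_system_def by (elim conjE)
  then show ?thesis using assms by blast
qed

(* The universal property in coxeter_system only covers groups with carrier type
   'g list set set; transporting the structure along an injection makes it available for every
   group that embeds into 'g list set. *)
lemma hom_from_gens:
  fixes H :: "'b monoid" and e :: "'b \<Rightarrow> 'g list set"
  assumes H: "group H" and e: "inj_on e (carrier H)" and f: "f \<in> S \<rightarrow> carrier H"
    and rel: "\<forall>s\<in>S. \<forall>t\<in>S. (f s \<otimes>\<^bsub>H\<^esub> f t) [^]\<^bsub>H\<^esub> cox_m W s t = \<one>\<^bsub>H\<^esub>"
  shows "\<exists>h\<in>hom W H. \<forall>s\<in>S. h s = f s"
proof -
  let ?T = "transport_group H e"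
  interpret H: group H by (rule H)
  have T: "group ?T" and eiso: "e \<in> iso H ?T"
    using transport_group[OF H e] by auto
  have ehom: "e \<in> hom H ?T" using eiso by (simp add: iso_def)
  have "(e \<circ> f) \<in> S \<rightarrow> carrier ?T" using f ehom by (auto simp: hom_def)
  moreover have "((e \<circ> f) s \<otimes>\<^bsub>?T\<^esub> (e \<circ> f) t) [^]\<^bsub>?T\<^esub> cox_m W s t = \<one>\<^bsub>?T\<^esub>"
    if "s \<in> S" "t \<in> S" for s t
  proof -
    have fst: "f s \<in> carrier H" "f t \<in> carrier H" using that f by auto
    have "((e \<circ> f) s \<otimes>\<^bsub>?T\<^esub> (e \<circ> f) t) [^]\<^bsub>?T\<^esub> cox_m W s t
        = e ((f s \<otimes>\<^bsub>H\<^esub> f t) [^]\<^bsub>H\<^esub> cox_m W s t)"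
      using fst by (simp add: hom_mult[OF ehom] hom_nat_pow[OF ehom _ H T])
    also have "\<dots> = \<one>\<^bsub>?T\<^esub>" using that rel hom_one[OF ehom H T] by simp
    finally show ?thesis .
  qed
  ultimately obtain k where k: "k \<in> hom W ?T" "\<forall>s\<in>S. k s = (e \<circ> f) s"
    using universal_property[OF T] by blast
  have "compose (carrier W) (inv_into (carrier H) e) k \<in> hom W H"
    using H.iso_set_sym[OF eiso] by (intro hom_compose[OF k(1)]) (simp add: iso_def)
  moreover have "compose (carrier W) (inv_into (carrier H) e) k s = f s" if "s \<in> S" for s
    using that k(2) f e gens_closed by (auto simp: compose_eq inv_into_f_f Pi_iff)
  ultimately show ?thesis by blast
qed

lemma alt_prod_mult_reverse:
  assumes "s \<in> S" "r \<in> S"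
  shows "alt_prod W s r j \<otimes> alt_prod W (if even j then r else s) (if even j then s else r) j = \<one>"
proof -
  have "inv (alt_prod W s r j) = alt_prod W (if even j then r else s) (if even j then s else r) j"
    using alt_prod_inv[of s r j] assms by (simp add: gens_closed gen_square)
  then show ?thesis
    by (metis r_inv alt_prod_gens_closed assms)
qed

lemma alt_prod_gens_Suc:
  "a \<in> S \<Longrightarrow> b \<in> S \<Longrightarrow> y \<in> carrier W \<Longrightarrow>
    y \<otimes> alt_prod W a b (Suc j) = y \<otimes> alt_prod W a b j \<otimes> (if even j then a else b)"
  by (simp add: m_assoc alt_prod_gens_closed gens_closed)

(* A descending walk of length m(s,r) would, by the braid relation, also be a walk of length
   m(s,r) - 1 starting from the longer element v r. *)
lemma descending_alt_walk_shorter: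
  assumes s: "s \<in> S" and r: "r \<in> S" and v: "v \<in> carrier W"
    and ascent: "len v < len (v \<otimes> r)" and m: "cox_m W s r \<noteq> 0"
    and descent: "len (v \<otimes> alt_prod W s r j) + j = len v"
  shows "j < cox_m W s r"
proof (rule ccontr)
  define m where "m = cox_m W s r"
  assume "\<not> j < cox_m W s r"
  then have "m \<le> j" by (simp add: m_def)
  then have "v \<otimes> alt_prod W s r j =
      v \<otimes> alt_prod W s r m \<otimes> alt_prod W (if even m then s else r) (if even m then r else s) (j - m)"
    using alt_prod_add[of s r m "j - m"] s r v by (simp add: gens_closed m_assoc alt_prod_closed)
  then have "len (v \<otimes> alt_prod W s r m) \<le> len (v \<otimes> alt_prod W s r j) + (j - m)"
    using len_le_mult_alt_prod[of "v \<otimes> alt_prod W s r m" "if even m then s else r"] s r v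
    by (simp add: alt_prod_gens_closed)
  moreover obtain m' where m': "m = Suc m'" using m by (cases m) (auto simp: m_def)
  then have "v \<otimes> alt_prod W s r m = v \<otimes> r \<otimes> alt_prod W s r m'"
    using alt_prod_cox_m[OF s r] alt_prod_Suc_left[of r s m'] s r v
    by (simp add: m_def gens_closed m_assoc alt_prod_closed)
  then have "len (v \<otimes> r) \<le> len (v \<otimes> alt_prod W s r m) + m'"
    using len_le_mult_alt_prod[of "v \<otimes> r" s r m'] s r v by (simp add: gens_closed)
  ultimately show False
    using ascent descent \<open>m \<le> j\<close> m' by linarith
qed

end

definition potential :: "'g monoid \<Rightarrow> 'g set \<Rightarrow> ('g \<Rightarrow> 'g \<Rightarrow> int) \<Rightarrow> ('g \<Rightarrow> int) \<Rightarrow> bool" where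
  "potential W S ori h \<longleftrightarrow> (\<forall>w\<in>carrier W. \<forall>s\<in>S. h (w \<otimes>\<^bsub>W\<^esub> s) = h w + ori w s)"

locale coxeter_orientation = coxeter W S for W :: "'g monoid" (structure) and S +
  fixes ori :: "'g \<Rightarrow> 'g \<Rightarrow> int"
  assumes orientation: "orientation W S ori"
begin

lemma ori_values: "w \<in> carrier W \<Longrightarrow> s \<in> S \<Longrightarrow> ori w s = 1 \<or> ori w s = -1"
  using orientation by (auto simp: orientation_def)

lemma ori_mult_gen: "w \<in> carrier W \<Longrightarrow> s \<in> S \<Longrightarrow> ori (w \<otimes> s) s = - ori w s"
  using orientation by (simp add: orientation_def)

lemma ori_braid:
  assumes "s \<in> S" "t \<in> S" "w \<in> carrier W" "cox_m W s t \<noteq> 0"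
  obtains (plus_first) k where "k \<le> cox_m W s t"
      "\<And>i. i < cox_m W s t \<Longrightarrow> or_seq W ori w s t i = (if i < k then 1 else -1)"
      "\<And>i. i < cox_m W s t \<Longrightarrow> or_seq W ori w t s i = (if i < cox_m W s t - k then -1 else 1)"
  | (minus_first) k where "k \<le> cox_m W s t"
      "\<And>i. i < cox_m W s t \<Longrightarrow> or_seq W ori w s t i = (if i < k then -1 else 1)"
      "\<And>i. i < cox_m W s t \<Longrightarrow> or_seq W ori w t s i = (if i < cox_m W s t - k then 1 else -1)"
  using orientation assms unfolding orientation_def Let_def by blast

lemma sum_or_seq_swap:
  assumes "s \<in> S" "t \<in> S" "w \<in> carrier W"
  shows "(\<Sum>i<cox_m W s t. or_seq W ori w s t i) = (\<Sum>i<cox_m W s t. or_seq W ori w t s i)"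
proof (cases "cox_m W s t = 0")
  case False
  then show ?thesis
    by (rule ori_braid[OF assms]) (simp_all add: sum_lessThan_if_less)
qed simp

lemma or_seq_all_minus:
  assumes "s \<in> S" "t \<in> S" "w \<in> carrier W" "ori w s = -1" "ori w t = -1"
    and i: "i < cox_m W s t"
  shows "or_seq W ori w s t i = -1"
proof -
  have starts: "or_seq W ori w s t 0 = -1" "or_seq W ori w t s 0 = -1"
    using assms by (simp_all add: or_seq_def)
  have "cox_m W s t \<noteq> 0" using i by simp
  then show ?thesis
  proof (rule ori_braid[OF assms(1-3)])
    fix k
    assume plus_first: "\<And>i. i < cox_m W s t \<Longrightarrow> or_seq W ori w s t i = (if i < k then 1 else -1)"
    have "or_seq W ori w s t 0 = (if 0 < k then 1 else -1)"
      using plus_first i by simp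
    then have "k = 0" using starts by (simp split: if_splits)
    then show ?thesis using plus_first i by simp
  next
    fix k
    assume minus_first:
      "\<And>i. i < cox_m W s t \<Longrightarrow> or_seq W ori w s t i = (if i < k then -1 else 1)"
      "\<And>i. i < cox_m W s t \<Longrightarrow> or_seq W ori w t s i = (if i < cox_m W s t - k then 1 else -1)"
    have "or_seq W ori w t s 0 = (if 0 < cox_m W s t - k then 1 else -1)"
      using minus_first i by simp
    then have "cox_m W s t \<le> k" using starts by (simp split: if_splits)
    then show ?thesis using minus_first i by simp
  qed
qed

definition wreath_gen :: "'g \<Rightarrow> 'g \<times> ('g \<Rightarrow> int)" where
  "wreath_gen s = (s, restrict (\<lambda>x. ori x s) (carrier W))"

interpretation wreath: plain_group "int_wreath W"
  by (simp add: plain_group_def group_int_wreath)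

lemma wreath_gen_closed: "s \<in> S \<Longrightarrow> wreath_gen s \<in> carrier (int_wreath W)"
  by (simp add: wreath_gen_def int_wreath_simps gens_closed)

lemma wreath_gen_square:
  "s \<in> S \<Longrightarrow> wreath_gen s \<otimes>\<^bsub>int_wreath W\<^esub> wreath_gen s = \<one>\<^bsub>int_wreath W\<^esub>"
  by (auto simp: wreath_gen_def int_wreath_simps gen_square gens_closed ori_mult_gen fun_eq_iff)

lemma alt_prod_wreath_gen:
  assumes "s \<in> S" "t \<in> S"
  shows "alt_prod (int_wreath W) (wreath_gen s) (wreath_gen t) n =
    (alt_prod W s t n, restrict (\<lambda>x. \<Sum>i<n. or_seq W ori x s t i) (carrier W))"
proof (induction n)
  case (Suc n)
  have "alt_prod (int_wreath W) (wreath_gen s) (wreath_gen t) (Suc n) =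
      (alt_prod W s t n, restrict (\<lambda>x. \<Sum>i<n. or_seq W ori x s t i) (carrier W))
        \<otimes>\<^bsub>int_wreath W\<^esub> wreath_gen (if even n then s else t)"
    by (simp only: alt_prod.simps Suc.IH if_distrib[of wreath_gen])
  then show ?case
    using assms by (auto simp: int_wreath_simps wreath_gen_def fun_eq_iff or_seq_def alt_prod_gens_closed)
qed (simp add: int_wreath_simps restrict_def)

lemma wreath_gen_braid:
  assumes s: "s \<in> S" and t: "t \<in> S"
  shows "(wreath_gen s \<otimes>\<^bsub>int_wreath W\<^esub> wreath_gen t) [^]\<^bsub>int_wreath W\<^esub> cox_m W s t = \<one>\<^bsub>int_wreath W\<^esub>"
proof -
  have "alt_prod (int_wreath W) (wreath_gen s) (wreath_gen t) (cox_m W s t) =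
      alt_prod (int_wreath W) (wreath_gen t) (wreath_gen s) (cox_m W s t)"
    using alt_prod_cox_m[OF s t] sum_or_seq_swap[OF s t] cox_m_sym[OF s t]
    by (simp add: alt_prod_wreath_gen[OF s t] alt_prod_wreath_gen[OF t s] restrict_def fun_eq_iff)
  then show ?thesis
    using wreath.alt_prod_braid_iff wreath_gen_closed wreath_gen_square s t by blast
qed

lemma potential_exists: "\<exists>h. potential W S ori h"
proof -
  obtain F where F: "F \<in> hom W (int_wreath W)" and F_gens: "\<forall>s\<in>S. F s = wreath_gen s"
    using hom_from_gens[OF group_int_wreath inj_on_int_wreath_code, of wreath_gen]
      wreath_gen_closed wreath_gen_braid by (auto simp: Pi_iff)
  have fst_F: "fst (F w) = w" if "w \<in> carrier W" for w
  proof -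
    have "w \<in> generate W S" using that generate_gens by simp
    then show ?thesis
    proof (induction rule: generate.induct)
      case one
      then show ?case using hom_one[OF F is_group group_int_wreath] by (simp add: int_wreath_simps)
    next
      case (incl s)
      then show ?case by (simp add: F_gens wreath_gen_def)
    next
      case (inv s)
      then show ?case by (simp add: F_gens wreath_gen_def gen_inv)
    next
      case (eng w v)
      then have "F (w \<otimes> v) = F w \<otimes>\<^bsub>int_wreath W\<^esub> F v"
        using F generate_gens by (simp add: hom_mult)
      then show ?case using eng by (simp add: int_wreath_simps)
    qed
  qed
  have "snd (F (w \<otimes> s)) \<one> = snd (F w) \<one> + ori w s" if "w \<in> carrier W" "s \<in> S" for w s
  proof -
    have "F (w \<otimes> s) = F w \<otimes>\<^bsub>int_wreath W\<^esub> wreath_gen s"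
      using that F F_gens gens_closed by (simp add: hom_mult)
    then show ?thesis
      using that fst_F by (simp add: int_wreath_simps wreath_gen_def case_prod_beta)
  qed
  then have "potential W S ori (\<lambda>w. snd (F w) \<one>)"
    unfolding potential_def by blast
  then show ?thesis by (rule exI[of _ "\<lambda>w. snd (F w) \<one>"])
qed

lemma ori_minus_at_ascent:
  assumes finite_m: "\<forall>s\<in>S. \<forall>t\<in>S. cox_m W s t \<noteq> 0"
    and w0: "w0 \<in> carrier W"
    and ascents: "\<And>x y. x \<in> carrier W \<Longrightarrow> y \<in> S \<Longrightarrow> len x \<le> len (x \<otimes> y) \<Longrightarrow>
      len (x \<otimes> y) \<le> len v \<Longrightarrow> ori (w0 \<otimes> x) y = -1"
    and v: "v \<in> carrier W" "v \<noteq> \<one>" and r: "r \<in> S" and ascent: "len v < len (v \<otimes> r)"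
  shows "ori (w0 \<otimes> v) r = -1"
proof -
  obtain u s where u: "u \<in> carrier W" "s \<in> S" "v = u \<otimes> s" "len u + 1 = len v"
    using v len_eq_0_iff len_Suc_decompose[OF v(1)] by (metis Suc_eq_plus1 not0_implies_Suc)
  define y where "y j = v \<otimes> alt_prod W s r j" for j
  have y_closed: "y j \<in> carrier W" for j
    using v u r by (simp add: y_def alt_prod_gens_closed)
  have y_Suc: "y (Suc j) = y j \<otimes> (if even j then s else r)" for j
    using alt_prod_gens_Suc u r v by (simp add: y_def)
  define P where "P j \<longleftrightarrow> len (y j) + j = len v" for j
  have "P 1" using u by (simp add: P_def y_def gens_closed mult_gen_gen_cancel)
  define J where "J = (GREATEST j. P j)"
  have P_le: "P j \<Longrightarrow> j \<le> len v" for j by (simp add: P_def)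
  have "P J" "1 \<le> J" and J_max: "\<And>j. P j \<Longrightarrow> j \<le> J"
    using GreatestI_nat[of P 1, OF \<open>P 1\<close> P_le] Greatest_le_nat[of P _ "len v", OF _ P_le] \<open>P 1\<close>
    by (auto simp: J_def)
  then obtain J' where J': "J = Suc J'" by (cases J) auto
  define prev ahead where "prev = (if even J then r else s)" and "ahead = (if even J then s else r)"
  have gens: "prev \<in> S" "ahead \<in> S" using u r by (simp_all add: prev_def ahead_def)
  have "ori (w0 \<otimes> y J) prev = -1"
  proof (rule ascents[OF y_closed gens(1)])
    have "y J \<otimes> prev = y J'"
      using J' y_Suc u r by (simp add: prev_def mult_gen_gen_cancel y_closed)
    moreover have "len v \<le> len (y J') + J'"
      using len_le_mult_alt_prod u r v by (simp add: y_def)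
    ultimately show "len (y J) \<le> len (y J \<otimes> prev)" "len (y J \<otimes> prev) \<le> len v"
      using \<open>P J\<close> J' len_mult_gen_le[OF y_closed gens(1), of J] by (auto simp: P_def)
  qed
  moreover have "ori (w0 \<otimes> y J) ahead = -1"
  proof (rule ascents[OF y_closed gens(2)])
    have "y J \<otimes> ahead = y (Suc J)" by (simp add: y_Suc ahead_def)
    then show "len (y J) \<le> len (y J \<otimes> ahead)"
      using J_max[of "Suc J"] \<open>P J\<close> len_le_mult_gen[OF y_closed gens(2), of J]
      by (force simp: P_def)
    show "len (y J \<otimes> ahead) \<le> len v"
      using \<open>P J\<close> \<open>1 \<le> J\<close> len_mult_gen_le[OF y_closed gens(2), of J] by (simp add: P_def)
  qed
  moreover have "J < cox_m W prev ahead"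
    using descending_alt_walk_shorter[OF u(2) r v(1) ascent _ \<open>P J\<close>[unfolded P_def y_def]]
      finite_m u(2) r cox_m_sym by (auto simp: prev_def ahead_def)
  ultimately have "or_seq W ori (w0 \<otimes> y J) prev ahead J = -1"
    using or_seq_all_minus[OF gens m_closed[OF w0 y_closed]] by blast
  moreover have "y J \<otimes> alt_prod W prev ahead J = v"
    using alt_prod_mult_reverse[OF u(2) r, of J] u r v
    by (simp add: y_def prev_def ahead_def m_assoc alt_prod_gens_closed)
  then have "w0 \<otimes> y J \<otimes> alt_prod W prev ahead J = w0 \<otimes> v"
    using w0 gens by (simp add: m_assoc y_closed alt_prod_gens_closed)
  moreover have "(if even J then prev else ahead) = r" by (simp add: prev_def ahead_def)
  ultimately show ?thesis by (simp add: or_seq_def)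
qed

lemma ori_minus_at_potential_max:
  assumes pot: "potential W S ori h" and w0: "w0 \<in> carrier W"
    and max: "\<And>w. w \<in> carrier W \<Longrightarrow> h w \<le> h w0" and s: "s \<in> S"
  shows "ori w0 s = -1"
  using pot max[of "w0 \<otimes> s"] ori_values[OF w0 s] w0 s
  by (force simp: potential_def gens_closed)

lemma potential_from_sink:
  assumes finite_m: "\<forall>s\<in>S. \<forall>t\<in>S. cox_m W s t \<noteq> 0"
    and pot: "potential W S ori h" and w0: "w0 \<in> carrier W" and sink: "\<forall>s\<in>S. ori w0 s = -1"
  shows "v \<in> carrier W \<Longrightarrow> h (w0 \<otimes> v) = h w0 - int (len v)"
proof (induction "len v" arbitrary: v rule: less_induct)
  case less
  have step: "h (w0 \<otimes> x \<otimes> y) = h (w0 \<otimes> x) + ori (w0 \<otimes> x) y"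
    if "x \<in> carrier W" "y \<in> S" for x y
    using pot w0 that by (simp add: potential_def)
  show ?case
  proof (cases "v = \<one>")
    case True
    then show ?thesis using w0 by (simp add: len_eq_0_iff)
  next
    case False
    then obtain u r where u: "u \<in> carrier W" "r \<in> S" "v = u \<otimes> r" "len u + 1 = len v"
      using less.prems len_eq_0_iff len_Suc_decompose by (metis Suc_eq_plus1 not0_implies_Suc)
    have "ori (w0 \<otimes> u) r = -1"
    proof (cases "u = \<one>")
      case True
      then show ?thesis using sink u(2) w0 by simp
    next
      case False
      show ?thesis
      proof (rule ori_minus_at_ascent[OF finite_m w0 _ u(1) False u(2)])
        fix x y
        assume x: "x \<in> carrier W" and y: "y \<in> S"
          and ascent: "len x \<le> len (x \<otimes> y)" and short: "len (x \<otimes> y) \<le> len u"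
        have "h (w0 \<otimes> (x \<otimes> y)) = h (w0 \<otimes> x) + ori (w0 \<otimes> x) y"
          using step[OF x y] x y w0 by (simp add: m_assoc gens_closed)
        then have "ori (w0 \<otimes> x) y \<le> 0"
          using less.hyps[of x] less.hyps[of "x \<otimes> y"] x y ascent short u(4)
          by (simp add: gens_closed)
        then show "ori (w0 \<otimes> x) y = -1"
          using ori_values[of "w0 \<otimes> x" y] x y w0 by auto
      qed (use u in simp)
    qed
    then show ?thesis
      using step[OF u(1,2)] less.hyps[OF _ u(1)] u w0 by (simp add: m_assoc gens_closed)
  qed
qed

lemma ori_eq_orientation_towards:
  assumes pot: "potential W S ori h" and w0: "w0 \<in> carrier W"
    and graded: "\<And>v. v \<in> carrier W \<Longrightarrow> h (w0 \<otimes> v) = h w0 - int (len v)"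
    and w: "w \<in> carrier W" and s: "s \<in> S"
  shows "ori w s = orientation_towards W S w0 w s"
proof -
  define v where "v = inv w0 \<otimes> w"
  have v: "v \<in> carrier W" "w = w0 \<otimes> v"
    using w w0 by (simp_all add: v_def m_assoc[symmetric])
  have "ori w s = h (w \<otimes> s) - h w"
    using pot w s by (simp add: potential_def)
  also have "\<dots> = h (w0 \<otimes> (v \<otimes> s)) - h (w0 \<otimes> v)"
    using w0 s v by (simp add: m_assoc gens_closed)
  also have "\<dots> = int (len v) - int (len (v \<otimes> s))"
    using graded v s by (simp add: gens_closed)
  finally show ?thesis
    using ori_values[OF w s] unfolding orientation_towards_def v_def[symmetric] by auto
qed

end

theorem lemma2p5p13:
  fixes W :: "'a monoid" and S :: "'a set" and ori :: "'a \<Rightarrow> 'a \<Rightarrow> int"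
  assumes "coxeter_system W S"
    and "finite (carrier W)"
    and "orientation W S ori"
  shows "\<exists>w0\<in>carrier W. \<forall>w\<in>carrier W. \<forall>s\<in>S. ori w s = orientation_towards W S w0 w s"
proof -
  interpret coxeter_orientation W S ori
    using assms(1,3) by (simp add: coxeter_orientation_def coxeter_def coxeter_orientation_axioms_def)
  obtain h where pot: "potential W S ori h"
    using potential_exists by blast
  obtain w0 where w0: "w0 \<in> carrier W" and max: "\<And>w. w \<in> carrier W \<Longrightarrow> h w \<le> h w0"
    using Max_in[of "h ` carrier W"] Max_ge[of "h ` carrier W"] assms(2) by fastforce
  have "\<forall>s\<in>S. \<forall>t\<in>S. cox_m W s t \<noteq> 0"
    using cox_m_pos[OF assms(2)] by fastforce
  moreover have "\<forall>s\<in>S. ori w0 s = -1"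
    using ori_minus_at_potential_max[OF pot w0 max] by blast
  ultimately have "h (w0 \<otimes>\<^bsub>W\<^esub> v) = h w0 - int (cox_length W S v)" if "v \<in> carrier W" for v
    using potential_from_sink[OF _ pot w0] that by blast
  then show ?thesis
    using ori_eq_orientation_towards[OF pot w0] w0 by blast
qed

end
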